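(* Let $m\in\mathbb N$ and let $\xi_1,\dots,\xi_m$ be real random variables with partial sums $S_0=0$, $S_k=\xi_1+\dots+\xi_k$ ($1\le k\le m$). Assume (i) $S_m=0$ a.s.; (ii) for every cyclic permutation $\pi$ of $\{1,\dots,m\}$, $(\xi_1,\dots,\xi_m)$ and $(\xi_{\pi(1)},\dots,\xi_{\pi(m)})$ have the same distribution; (iii) for every $1\le k\le m-1$ the distribution of $S_k$ has no atoms. Then $$\mathbb P(S_1>0,\dots,S_{m-1}>0)=\frac1m.$$
   Context: A cyclic permutation of $\{1,\dots,m\}$ is a permutation whose cycle decomposition consists of exactly one cycle. *)

theory Defs
  imports "HOL-Probability.Probability"
begin

definition cyclic_perm :: "nat \<Rightarrow> (nat \<Rightarrow> nat) \<Rightarrow> bool" where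
  "cyclic_perm m \<pi> \<longleftrightarrow> \<pi> permutes {1..m} \<and>
     (\<forall>x\<in>{1..m}. \<forall>y\<in>{1..m}. \<exists>n. (\<pi> ^^ n) x = y)"

end

theory Submission
  imports Defs
begin

text \<open>
  The proof rests on the cycle lemma. If real numbers \<open>z\<^sub>1, \<dots>, z\<^sub>m\<close> sum to \<open>0\<close> and their
  prefix sums \<open>T\<^sub>0, \<dots>, T\<^sub>m\<^sub>-\<^sub>1\<close> are pairwise distinct, then exactly one cyclic rotation
  of \<open>(z\<^sub>1, \<dots>, z\<^sub>m)\<close> has all its proper partial sums positive, namely the one starting
  right after the index \<open>j\<close> where \<open>T\<^sub>j\<close> is minimal: the partial sums of the rotation by \<open>j\<close>
  are the differences \<open>T\<^sub>b - T\<^sub>j\<close>.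

  Distinctness of the prefix sums fails only if some rotation has a vanishing partial sum,
  which by cyclic invariance and the absence of atoms is a null event. Hence almost surely
  exactly one of the \<open>m\<close> events "the rotation by \<open>j\<close> has positive partial sums" occurs.
  These events have equal probability by cyclic invariance, so each has probability \<open>1/m\<close>;
  the event for \<open>j = 0\<close> is the one in the theorem.
\<close>

definition cyclic_shift :: "nat \<Rightarrow> nat \<Rightarrow> nat" where
  "cyclic_shift m i = (if i \<in> {1..m} then i mod m + 1 else i)"

lemma cyclic_shift_in: "i \<in> {1..m} \<Longrightarrow> cyclic_shift m i \<in> {1..m}"
  by (auto simp: cyclic_shift_def Suc_le_eq)

lemma funpow_cyclic_shift:
  assumes "i \<in> {1..m}" shows "(cyclic_shift m ^^ n) i = (i - 1 + n) mod m + 1"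
proof (induction n)
  case (Suc n)
  have "(cyclic_shift m ^^ Suc n) i = cyclic_shift m ((i - 1 + n) mod m + 1)"
    using Suc by simp
  also have "\<dots> = ((i - 1 + n) mod m + 1) mod m + 1"
    using assms by (simp add: cyclic_shift_def Suc_le_eq)
  also have "\<dots> = (i - 1 + Suc n) mod m + 1" by (simp add: mod_Suc_eq)
  finally show ?case .
qed (use assms in auto)

lemma cyclic_perm_cyclic_shift: "cyclic_perm m (cyclic_shift m)"
  unfolding cyclic_perm_def
proof
  have "inj_on (cyclic_shift m) {1..m}"
  proof (rule inj_onI)
    fix x y assume "x \<in> {1..m}" "y \<in> {1..m}" "cyclic_shift m x = cyclic_shift m y"
    then show "x = y" by (cases "x = m"; cases "y = m") (auto simp: cyclic_shift_def)
  qed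
  moreover have "cyclic_shift m ` {1..m} \<subseteq> {1..m}" using cyclic_shift_in by blast
  ultimately have "bij_betw (cyclic_shift m) {1..m} {1..m}"
    by (simp add: bij_betw_def endo_inj_surj)
  then show "cyclic_shift m permutes {1..m}"
    by (rule bij_imp_permutes) (auto simp: cyclic_shift_def)
  show "\<forall>x\<in>{1..m}. \<forall>y\<in>{1..m}. \<exists>n. (cyclic_shift m ^^ n) x = y"
  proof (intro ballI)
    fix x y assume x: "x \<in> {1..m}" and y: "y \<in> {1..m}"
    have "(cyclic_shift m ^^ (y + m - x)) x = (x - 1 + (y + m - x)) mod m + 1"
      using x by (rule funpow_cyclic_shift)
    also have "x - 1 + (y + m - x) = (y - 1) + m" using x y by auto
    also have "((y - 1) + m) mod m + 1 = y" using y by (simp only: mod_add_self2) auto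
    finally show "\<exists>n. (cyclic_shift m ^^ n) x = y" ..
  qed
qed

lemma sum_mod_shift:
  fixes z :: "nat \<Rightarrow> 'a::ab_group_add"
  shows "(\<Sum>i<k. z ((i + j) mod m)) = (\<Sum>i<j + k. z (i mod m)) - (\<Sum>i<j. z (i mod m))"
  by (induction k) (auto simp: add.commute)

lemma sum_mod_periodic:
  fixes z :: "nat \<Rightarrow> 'a::comm_monoid_add"
  assumes "(\<Sum>i<m. z i) = 0"
  shows "(\<Sum>i<n. z (i mod m)) = (\<Sum>i<n mod m. z i)"
proof -
  have period: "(\<Sum>i<a + m. z (i mod m)) = (\<Sum>i<a. z (i mod m))" for a
    by (induction a) (auto simp: assms)
  have periods: "(\<Sum>i<a + m * q. z (i mod m)) = (\<Sum>i<a. z (i mod m))" for a q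
  proof (induction q)
    case (Suc q)
    then show ?case using period[of "a + m * q"] by (simp add: ac_simps)
  qed simp
  have "(\<Sum>i<n. z (i mod m)) = (\<Sum>i<n mod m. z (i mod m))"
    using periods[of "n mod m" "n div m"] by simp
  also have "\<dots> = (\<Sum>i<n mod m. z i)"
  proof (rule sum.cong)
    fix i assume "i \<in> {..<n mod m}"
    then show "z (i mod m) = z i"
      by (cases "m = 0") (auto dest: order.strict_trans[OF _ mod_less_divisor])
  qed simp
  finally show ?thesis .
qed

lemma rotated_sum_eq_prefix_diff:
  fixes z :: "nat \<Rightarrow> 'a::ab_group_add"
  assumes "(\<Sum>i<m. z i) = 0" "j < m"
  shows "(\<Sum>i<k. z ((i + j) mod m)) = (\<Sum>i<(j + k) mod m. z i) - (\<Sum>i<j. z i)"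
  using sum_mod_shift[of z j m k] sum_mod_periodic[OF assms(1), of "j + k"]
    sum_mod_periodic[OF assms(1), of j] assms(2) by simp

lemma rotated_sums_pos_iff_strict_min:
  fixes z :: "nat \<Rightarrow> 'a::linordered_ab_group_add"
  assumes zero: "(\<Sum>i<m. z i) = 0" and j: "j < m"
  shows "(\<forall>k\<in>{1..m-1}. (\<Sum>i<k. z ((i + j) mod m)) > 0) \<longleftrightarrow>
    (\<forall>b<m. b \<noteq> j \<longrightarrow> (\<Sum>i<j. z i) < (\<Sum>i<b. z i))"
proof
  assume pos: "\<forall>k\<in>{1..m-1}. (\<Sum>i<k. z ((i + j) mod m)) > 0"
  show "\<forall>b<m. b \<noteq> j \<longrightarrow> (\<Sum>i<j. z i) < (\<Sum>i<b. z i)"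
  proof (intro allI impI)
    fix b assume b: "b < m" "b \<noteq> j"
    define k where "k = (if j < b then b - j else b + m - j)"
    have "k \<in> {1..m-1}" using b j by (auto simp: k_def)
    moreover have "(j + k) mod m = b"
      using b j by (auto simp: k_def le_mod_geq)
    ultimately show "(\<Sum>i<j. z i) < (\<Sum>i<b. z i)"
      using pos rotated_sum_eq_prefix_diff[OF zero j, of k] by fastforce
  qed
next
  assume min: "\<forall>b<m. b \<noteq> j \<longrightarrow> (\<Sum>i<j. z i) < (\<Sum>i<b. z i)"
  show "\<forall>k\<in>{1..m-1}. (\<Sum>i<k. z ((i + j) mod m)) > 0"
  proof
    fix k assume k: "k \<in> {1..m-1}"
    have "(j + k) mod m \<noteq> j"
      using j k by (cases "j + k < m") (auto simp: le_mod_geq)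
    then show "(\<Sum>i<k. z ((i + j) mod m)) > 0"
      using min rotated_sum_eq_prefix_diff[OF zero j, of k] j by simp
  qed
qed

lemma ex1_positive_rotation:
  fixes z :: "nat \<Rightarrow> 'a::linordered_ab_group_add"
  assumes m: "m > 0" and zero: "(\<Sum>i<m. z i) = 0"
    and inj: "inj_on (\<lambda>n. \<Sum>i<n. z i) {..<m}"
  shows "\<exists>!j. j < m \<and> (\<forall>k\<in>{1..m-1}. (\<Sum>i<k. z ((i + j) mod m)) > 0)"
proof -
  let ?T = "\<lambda>n. \<Sum>i<n. z i"
  have "Min (?T ` {..<m}) \<in> ?T ` {..<m}" using m by (intro Min_in) auto
  then obtain j where j: "j < m" "?T j = Min (?T ` {..<m})" by auto
  have "?T j < ?T b" if "b < m" "b \<noteq> j" for b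
    using j that inj_onD[OF inj, of j b] by (auto intro: order.not_eq_order_implies_strict)
  then have pos_j: "\<forall>k\<in>{1..m-1}. (\<Sum>i<k. z ((i + j) mod m)) > 0"
    using rotated_sums_pos_iff_strict_min[OF zero j(1)] by blast
  show ?thesis
  proof (rule ex1I)
    show "j < m \<and> (\<forall>k\<in>{1..m-1}. (\<Sum>i<k. z ((i + j) mod m)) > 0)" using j pos_j by blast
    fix j' assume j': "j' < m \<and> (\<forall>k\<in>{1..m-1}. (\<Sum>i<k. z ((i + j') mod m)) > 0)"
    show "j' = j"
    proof (rule ccontr)
      assume "j' \<noteq> j"
      then have "?T j' < ?T j" "?T j < ?T j'"
        using rotated_sums_pos_iff_strict_min[OF zero] j j' pos_j by blast+
      then show False by simp
    qed
  qed
qed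

definition rotate_coords :: "nat \<Rightarrow> (nat \<Rightarrow> 'b) \<Rightarrow> nat \<Rightarrow> 'b" where
  "rotate_coords m y = (\<lambda>i\<in>{1..m}. y (cyclic_shift m i))"

lemma funpow_rotate_coords:
  "i \<in> {1..m} \<Longrightarrow> (rotate_coords m ^^ n) y i = y ((cyclic_shift m ^^ n) i)"
proof (induction n arbitrary: i)
  case (Suc n)
  have "(rotate_coords m ^^ Suc n) y i = (rotate_coords m ^^ n) y (cyclic_shift m i)"
    using Suc.prems by (simp add: rotate_coords_def)
  also have "\<dots> = y ((cyclic_shift m ^^ Suc n) i)"
    using Suc cyclic_shift_in by (simp add: funpow_swap1)
  finally show ?case .
qed simp

lemma sum_funpow_rotate_coords:
  assumes "k \<le> m"
  shows "(\<Sum>i=1..k. (rotate_coords m ^^ n) y i) = (\<Sum>i<k. y (Suc ((i + n) mod m)))"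
proof -
  have "(\<Sum>i=1..k. (rotate_coords m ^^ n) y i) = (\<Sum>i<k. (rotate_coords m ^^ n) y (Suc i))"
    by (simp add: sum.atLeast1_atMost_eq)
  also have "\<dots> = (\<Sum>i<k. y (Suc ((i + n) mod m)))"
    using assms by (intro sum.cong) (auto simp: funpow_rotate_coords funpow_cyclic_shift)
  finally show ?thesis .
qed

lemma ex1_positive_rotate_coords:
  fixes y :: "nat \<Rightarrow> 'a::linordered_ab_group_add"
  assumes m: "m > 0" and zero: "(\<Sum>i=1..m. y i) = 0"
    and nonzero: "\<And>a k. a < m \<Longrightarrow> k \<in> {1..m-1} \<Longrightarrow> (\<Sum>i=1..k. (rotate_coords m ^^ a) y i) \<noteq> 0"
  shows "\<exists>!j. j < m \<and> (\<forall>k\<in>{1..m-1}. (\<Sum>i=1..k. (rotate_coords m ^^ j) y i) > 0)"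
proof -
  define z where "z i = y (Suc i)" for i
  have z_zero: "(\<Sum>i<m. z i) = 0"
    using zero by (simp add: z_def sum.atLeast1_atMost_eq)
  have rotated: "(\<Sum>i=1..k. (rotate_coords m ^^ j) y i) = (\<Sum>i<k. z ((i + j) mod m))"
    if "k \<in> {1..m-1}" for j k
    using that sum_funpow_rotate_coords[of k m j y] by (auto simp: z_def)
  have "inj_on (\<lambda>n. \<Sum>i<n. z i) {..<m}"
  proof (rule linorder_inj_onI')
    fix a b assume ab: "a \<in> {..<m}" "b \<in> {..<m}" "a < b"
    then have k: "b - a \<in> {1..m-1}" by auto
    have "(\<Sum>i<b. z i) - (\<Sum>i<a. z i) = (\<Sum>i=1..b-a. (rotate_coords m ^^ a) y i)"
      using rotated_sum_eq_prefix_diff[OF z_zero, of a "b - a"] rotated[OF k, of a] ab by simp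
    also have "\<dots> \<noteq> 0"
      using ab k by (intro nonzero) auto
    finally show "(\<Sum>i<a. z i) \<noteq> (\<Sum>i<b. z i)" by simp
  qed
  moreover have "(\<forall>k\<in>{1..m-1}. (\<Sum>i=1..k. (rotate_coords m ^^ j) y i) > 0) \<longleftrightarrow>
      (\<forall>k\<in>{1..m-1}. (\<Sum>i<k. z ((i + j) mod m)) > 0)" for j
    using rotated by auto
  ultimately show ?thesis
    using ex1_positive_rotation[OF m z_zero] by simp
qed

lemma measurable_funpow: "f \<in> M \<rightarrow>\<^sub>M M \<Longrightarrow> f ^^ n \<in> M \<rightarrow>\<^sub>M M"
  by (induction n) (auto intro: measurable_comp)

lemma distr_funpow_eq:
  assumes f: "f \<in> M \<rightarrow>\<^sub>M M" and inv: "distr M M f = M"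
  shows "distr M M (f ^^ n) = M"
proof (induction n)
  case (Suc n)
  have "distr M M (f ^^ Suc n) = distr (distr M M (f ^^ n)) M f"
    using distr_distr[OF f measurable_funpow[OF f]] by simp
  also have "\<dots> = M" using Suc inv by simp
  finally show ?case .
qed (simp add: distr_id)

lemma (in prob_space) sum_prob_eq_1_if_AE_ex1:
  assumes J: "finite J" and A: "\<And>j. j \<in> J \<Longrightarrow> A j \<in> events"
    and ex1: "AE x in M. \<exists>!j. j \<in> J \<and> x \<in> A j"
  shows "(\<Sum>j\<in>J. prob (A j)) = 1"
proof -
  have "AE x in M. (\<Sum>j\<in>J. indicator (A j) x) = (1::real)"
    using ex1
  proof eventually_elim
    case (elim x)
    then obtain j0 where "j0 \<in> J" "\<And>j. j \<in> J \<Longrightarrow> x \<in> A j \<longleftrightarrow> j = j0" by blast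
    then have "(\<Sum>j\<in>J. indicator (A j) x) = (\<Sum>j\<in>J. if j = j0 then 1 else 0 :: real)"
      by (intro sum.cong) auto
    then show ?case using J \<open>j0 \<in> J\<close> by simp
  qed
  then have "expectation (\<lambda>x. \<Sum>j\<in>J. indicator (A j) x) = expectation (\<lambda>_. 1 :: real)"
    using A by (intro integral_cong_AE) auto
  moreover have "expectation (\<lambda>x. \<Sum>j\<in>J. indicator (A j) x :: real) = (\<Sum>j\<in>J. expectation (indicator (A j)))"
    by (rule Bochner_Integration.integral_sum) (use A in \<open>auto simp: emeasure_eq_measure\<close>)
  moreover have "expectation (indicator (A j)) = prob (A j)" if "j \<in> J" for j
    using A[OF that] by (simp add: Int_absorb2)
  ultimately show ?thesis by (simp add: prob_space)
qed

lemma measurable_rotate_coords: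
  "rotate_coords m \<in> PiM {1..m} (\<lambda>_. M) \<rightarrow>\<^sub>M PiM {1..m} (\<lambda>_. M)"
  unfolding rotate_coords_def
  by (intro measurable_restrict measurable_component_singleton) (use cyclic_shift_in[of _ m] in auto)

lemma measurable_partial_sum:
  fixes k m :: nat
  assumes "k \<le> m"
  shows "(\<lambda>y. \<Sum>i=1..k. y i :: real) \<in> borel_measurable (PiM {1..m} (\<lambda>_. borel))"
  using assms by (intro borel_measurable_sum measurable_component_singleton) auto

lemma prob_positive_partial_sums_eq_inverse:
  fixes Q :: "(nat \<Rightarrow> real) measure"
  assumes "prob_space Q" and m: "m \<ge> 1"
    and sets_Q: "sets Q = sets (PiM {1..m} (\<lambda>_. borel))"
    and inv: "distr Q Q (rotate_coords m) = Q"
    and sum_zero: "AE y in Q. (\<Sum>i=1..m. y i) = 0"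
    and no_zero: "\<And>k. k \<in> {1..m-1} \<Longrightarrow> measure Q {y \<in> space Q. (\<Sum>i=1..k. y i) = 0} = 0"
  shows "measure Q {y \<in> space Q. \<forall>k\<in>{1..m-1}. (\<Sum>i=1..k. y i) > 0} = 1 / real m"
proof -
  interpret Q: prob_space Q by fact
  let ?g = "rotate_coords m"
  have g: "?g \<in> Q \<rightarrow>\<^sub>M Q"
    using measurable_rotate_coords unfolding measurable_cong_sets[OF sets_Q sets_Q] .
  have g_space: "(?g ^^ n) y \<in> space Q" if "y \<in> space Q" for n y
    using measurable_space[OF measurable_funpow[OF g] that] .
  have prob_preimage: "Q.prob ((?g ^^ n) -` B \<inter> space Q) = Q.prob B" if "B \<in> sets Q" for n B
    using measure_distr[OF measurable_funpow[OF g] that] distr_funpow_eq[OF g inv] by simp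
  have partial_sum: "(\<lambda>y. \<Sum>i=1..k. y i) \<in> borel_measurable Q" if "k \<le> m" for k
    unfolding measurable_cong_sets[OF sets_Q refl] using that by (rule measurable_partial_sum)
  define Pos where "Pos = {y \<in> space Q. \<forall>k\<in>{1..m-1}. (\<Sum>i=1..k. y i) > 0}"
  have Pos: "Pos \<in> sets Q"
    unfolding Pos_def using partial_sum by (intro sets.sets_Collect_finite_All) auto
  define A where "A j = (?g ^^ j) -` Pos \<inter> space Q" for j
  have A: "A j \<in> sets Q" for j
    unfolding A_def using measurable_funpow[OF g] Pos by (rule measurable_sets)
  have "AE y in Q. \<forall>a\<in>{..<m}. \<forall>k\<in>{1..m-1}. (\<Sum>i=1..k. (?g ^^ a) y i) \<noteq> 0"
  proof (intro AE_finite_allI finite_lessThan finite_atLeastAtMost)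
    fix a k assume k: "k \<in> {1..m-1}"
    define Z where "Z = {y \<in> space Q. (\<Sum>i=1..k. y i) = 0}"
    have Z: "Z \<in> sets Q"
      unfolding Z_def using k by (intro borel_measurable_eq partial_sum) auto
    have "(?g ^^ a) -` Z \<inter> space Q \<in> null_sets Q"
      using prob_preimage[OF Z, of a] no_zero[OF k, folded Z_def]
        measurable_sets[OF measurable_funpow[OF g] Z]
      by (simp add: null_sets_def Q.emeasure_eq_measure)
    then have "AE y in Q. y \<notin> (?g ^^ a) -` Z \<inter> space Q" by (rule AE_not_in)
    then show "AE y in Q. (\<Sum>i=1..k. (?g ^^ a) y i) \<noteq> 0"
      using g_space by (auto simp: Z_def elim!: AE_mp intro!: AE_I2)
  qed
  then have "AE y in Q. \<exists>!j. j \<in> {..<m} \<and> y \<in> A j"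
    using sum_zero AE_space
  proof eventually_elim
    case (elim y)
    then have "y \<in> A j \<longleftrightarrow> (\<forall>k\<in>{1..m-1}. (\<Sum>i=1..k. (?g ^^ j) y i) > 0)" for j
      using g_space unfolding A_def Pos_def by auto
    then show ?case using ex1_positive_rotate_coords[of m y] elim m by simp
  qed
  then have "(\<Sum>j<m. Q.prob (A j)) = 1"
    using A by (intro Q.sum_prob_eq_1_if_AE_ex1) auto
  moreover have "Q.prob (A j) = Q.prob Pos" for j
    unfolding A_def by (rule prob_preimage[OF Pos])
  ultimately show ?thesis
    using m unfolding Pos_def by (simp add: field_simps)
qed

lemma measure_distr_partial_sums:
  fixes \<xi> :: "nat \<Rightarrow> 'a \<Rightarrow> real"
  assumes meas: "\<And>i. i \<in> {1..m} \<Longrightarrow> \<xi> i \<in> borel_measurable M"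
    and K: "K \<subseteq> {1..m}" and R: "\<And>k. k \<in> K \<Longrightarrow> {x. R k x} \<in> sets borel"
  shows "measure (distr M (PiM {1..m} (\<lambda>_. borel)) (\<lambda>\<omega>. \<lambda>i\<in>{1..m}. \<xi> i \<omega>))
      {y \<in> space (PiM {1..m} (\<lambda>_. borel)). \<forall>k\<in>K. R k (\<Sum>i=1..k. y i)}
    = measure M {\<omega> \<in> space M. \<forall>k\<in>K. R k (\<Sum>i=1..k. \<xi> i \<omega>)}"
proof -
  let ?N = "PiM {1..m} (\<lambda>_. borel :: real measure)"
  have X: "(\<lambda>\<omega>. \<lambda>i\<in>{1..m}. \<xi> i \<omega>) \<in> M \<rightarrow>\<^sub>M ?N"
    using meas by (intro measurable_restrict) auto
  have "{y \<in> space ?N. R k (\<Sum>i=1..k. y i)} \<in> sets ?N" if "k \<in> K" for k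
  proof -
    have "k \<le> m" using that K by auto
    from measurable_sets[OF measurable_partial_sum[OF this] R[OF that]] show ?thesis
      by (simp add: vimage_def Int_def conj_commute)
  qed
  then have E: "{y \<in> space ?N. \<forall>k\<in>K. R k (\<Sum>i=1..k. y i)} \<in> sets ?N"
    using K finite_subset by (intro sets.sets_Collect_finite_All) auto
  have "(\<Sum>i=1..k. (\<lambda>i\<in>{1..m}. \<xi> i \<omega>) i) = (\<Sum>i=1..k. \<xi> i \<omega>)" if "k \<in> K" for k \<omega>
    using that K by (intro sum.cong) auto
  then have "(\<lambda>\<omega>. \<lambda>i\<in>{1..m}. \<xi> i \<omega>) -` {y \<in> space ?N. \<forall>k\<in>K. R k (\<Sum>i=1..k. y i)} \<inter> space M
      = {\<omega> \<in> space M. \<forall>k\<in>K. R k (\<Sum>i=1..k. \<xi> i \<omega>)}"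
    using measurable_space[OF X] by auto
  with measure_distr[OF X E] show ?thesis by simp
qed

lemma distr_distr_rotate_coords:
  assumes X: "X \<in> M \<rightarrow>\<^sub>M PiM {1..m} (\<lambda>_. N)"
  shows "distr (distr M (PiM {1..m} (\<lambda>_. N)) X) (distr M (PiM {1..m} (\<lambda>_. N)) X) (rotate_coords m)
    = distr M (PiM {1..m} (\<lambda>_. N)) (rotate_coords m \<circ> X)"
  using distr_distr[OF measurable_rotate_coords X] by (simp cong: distr_cong)

theorem mainTheorem8:
  fixes M :: "'a measure" and \<xi> :: "nat \<Rightarrow> 'a \<Rightarrow> real" and m :: nat
  assumes "prob_space M"
    and "m \<ge> 1"
    and meas: "\<And>i. i \<in> {1..m} \<Longrightarrow> \<xi> i \<in> borel_measurable M"
    and sum_zero: "AE \<omega> in M. (\<Sum>i=1..m. \<xi> i \<omega>) = 0"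
    and cyc: "\<And>\<pi>. cyclic_perm m \<pi> \<Longrightarrow>
        distr M (PiM {1..m} (\<lambda>_. borel)) (\<lambda>\<omega>. \<lambda>i\<in>{1..m}. \<xi> i \<omega>)
      = distr M (PiM {1..m} (\<lambda>_. borel)) (\<lambda>\<omega>. \<lambda>i\<in>{1..m}. \<xi> (\<pi> i) \<omega>)"
    and no_atoms: "\<And>k x. k \<in> {1..m-1} \<Longrightarrow>
        measure M {\<omega> \<in> space M. (\<Sum>i=1..k. \<xi> i \<omega>) = x} = 0"
  shows "measure M {\<omega> \<in> space M. \<forall>k\<in>{1..m-1}. (\<Sum>i=1..k. \<xi> i \<omega>) > 0} = 1 / real m"
proof -
  define X where "X \<omega> = (\<lambda>i\<in>{1..m}. \<xi> i \<omega>)" for \<omega>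
  define Q where "Q = distr M (PiM {1..m} (\<lambda>_. borel)) X"
  have X: "X \<in> M \<rightarrow>\<^sub>M PiM {1..m} (\<lambda>_. borel)"
    unfolding X_def using meas by (intro measurable_restrict) auto
  have "prob_space Q"
    unfolding Q_def by (rule prob_space.prob_space_distr[OF \<open>prob_space M\<close> X])
  moreover have "sets Q = sets (PiM {1..m} (\<lambda>_. borel))"
    unfolding Q_def by simp
  moreover have "distr Q Q (rotate_coords m) = Q"
    \<comment> \<open>only the one-step shift is needed; its powers, which need not be cyclic
      permutations, are covered by \<open>distr_funpow_eq\<close>\<close>
  proof -
    have "rotate_coords m \<circ> X = (\<lambda>\<omega>. \<lambda>i\<in>{1..m}. \<xi> (cyclic_shift m i) \<omega>)"
      using cyclic_shift_in[of _ m] by (auto simp: X_def rotate_coords_def fun_eq_iff)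
    then show ?thesis
      using distr_distr_rotate_coords[OF X] cyc[OF cyclic_perm_cyclic_shift]
      unfolding Q_def X_def by simp
  qed
  moreover have "AE y in Q. (\<Sum>i=1..m. y i) = 0"
    unfolding Q_def using sum_zero measurable_partial_sum[of m m]
    by (subst AE_distr_iff[OF X]) (auto simp: X_def)
  moreover have "measure Q {y \<in> space Q. (\<Sum>i=1..k. y i) = 0} = 0" if "k \<in> {1..m-1}" for k
    using measure_distr_partial_sums[OF meas, where K = "{k}" and R = "\<lambda>_ x. x = 0"]
      that no_atoms[OF that]
    unfolding Q_def X_def by auto
  ultimately have "measure Q {y \<in> space Q. \<forall>k\<in>{1..m-1}. (\<Sum>i=1..k. y i) > 0} = 1 / real m"
    using \<open>m \<ge> 1\<close> by (intro prob_positive_partial_sums_eq_inverse)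
  then show ?thesis
    using measure_distr_partial_sums[OF meas, where K = "{1..m-1}" and R = "\<lambda>_ x. x > 0"]
    unfolding Q_def X_def by auto
qed

end
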